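(* Consider the general additive Gaussian noise model: $Y = X + Z$ where $X \in \mathbb{R}^N$ is drawn from an arbitrary known prior (with all moments finite), $Z \in \mathbb{R}^N$ has i.i.d. $\mathcal{N}(0,1)$ entries independent of $X$, and $x \in \mathbb{R}$ is a scalar function of $X$ (with all joint moments with $X$ finite) to be estimated. Then for every integer $D \ge 0$, \[ \mathrm{Corr}_{\le D}^2 \le \sum_{\alpha \in \mathbb{N}^N,\ 0 \le |\alpha| \le D} \frac{\kappa_\alpha^2}{\alpha!}, \] where $\kappa_\alpha$ for $\alpha \in \mathbb{N}^N$ is defined recursively by \[ \kappa_\alpha = \mathbb{E}[x X^\alpha] - \sum_{0 \le \beta \lneq \alpha} \kappa_\beta \binom{\alpha}{\beta} \mathbb{E}[X^{\alpha-\beta}] \] (so in particular $\kappa_0 = \mathbb{E}[x]$).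
   Context: $\mathbb{N}=\{0,1,2,\dots\}$. For $\alpha \in \mathbb{N}^N$: $|\alpha| = \sum_i \alpha_i$, $\alpha! = \prod_i \alpha_i!$, $X^\alpha = \prod_i X_i^{\alpha_i}$; $\beta \le \alpha$ means $\beta_i \le \alpha_i$ for all $i$; $\beta \lneq \alpha$ means $\beta\le\alpha$ and $\beta\ne\alpha$; $\binom{\alpha}{\beta} = \prod_i \binom{\alpha_i}{\beta_i}$; $\alpha-\beta$ is entrywise. For an observation $Y$ and scalar target $x$ with joint law $\mathbb{P}$, the degree-$D$ maximum correlation is $\mathrm{Corr}_{\le D} = \sup\{ \mathbb{E}[f(Y)x]/\sqrt{\mathbb{E}[f(Y)^2]} : f \in \mathbb{R}[Y]_{\le D},\ \mathbb{E}[f(Y)^2]\neq 0\}$, where $\mathbb{R}[Y]_{\le D}$ is the space of real polynomials of degree at most $D$ in the coordinates of $Y$ and all expectations are over $\mathbb{P}$. The degree-$D$ minimum mean squared error is $\mathrm{MMSE}_{\le D} = \inf_{f \in \mathbb{R}[Y]_{\le D}} \mathbb{E}(f(Y)-x)^2$, and $\mathrm{MMSE}_{\le D} = \mathbb{E}[x^2] - \mathrm{Corr}_{\le D}^2$. *)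

theory Defs
  imports "HOL-Probability.Probability"
begin

(* Multi-indices alpha in N^N are functions 'n => nat over a finite index type 'n (|'n| = N). *)

definition mfact :: "('n::finite \<Rightarrow> nat) \<Rightarrow> real" where
  "mfact \<alpha> = (\<Prod>i\<in>UNIV. fact (\<alpha> i))"

definition mbinom :: "('n::finite \<Rightarrow> nat) \<Rightarrow> ('n \<Rightarrow> nat) \<Rightarrow> real" where
  "mbinom \<alpha> \<beta> = (\<Prod>i\<in>UNIV. real (\<alpha> i choose \<beta> i))"

definition mdeg :: "('n::finite \<Rightarrow> nat) \<Rightarrow> nat" where
  "mdeg \<alpha> = (\<Sum>i\<in>UNIV. \<alpha> i)"

definition monom :: "('n::finite \<Rightarrow> nat) \<Rightarrow> ('n \<Rightarrow> real) \<Rightarrow> real" where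
  "monom \<alpha> y = (\<Prod>i\<in>UNIV. y i ^ \<alpha> i)"

(* kappa_alpha = mx alpha - sum_{0 <= beta < alpha} kappa_beta * binom(alpha,beta) * m(alpha - beta),
   where mx alpha = E[x X^alpha] and m gamma = E[X^gamma]. *)
function kappa :: "(('n::finite \<Rightarrow> nat) \<Rightarrow> real) \<Rightarrow> (('n \<Rightarrow> nat) \<Rightarrow> real) \<Rightarrow> ('n \<Rightarrow> nat) \<Rightarrow> real" where
  "kappa m mx \<alpha> = mx \<alpha> -
     (\<Sum>\<beta>\<in>{\<beta>. \<beta> \<le> \<alpha> \<and> \<beta> \<noteq> \<alpha>}. kappa m mx \<beta> * mbinom \<alpha> \<beta> * m (\<lambda>i. \<alpha> i - \<beta> i))"
  by auto
termination
proof (relation "Wellfounded.measure (\<lambda>(m, mx, \<alpha>). mdeg \<alpha>)")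
  show "wf (Wellfounded.measure (\<lambda>(m, mx, \<alpha>). mdeg \<alpha>))" by simp
next
  fix m mx and \<alpha> \<beta> :: "'n::finite \<Rightarrow> nat"
  assume "\<beta> \<in> {\<beta>. \<beta> \<le> \<alpha> \<and> \<beta> \<noteq> \<alpha>}"
  then have le: "\<And>i. \<beta> i \<le> \<alpha> i" and ne: "\<exists>i. \<beta> i < \<alpha> i"
    by (auto simp: le_fun_def fun_eq_iff intro: le_neq_implies_less)
  have "mdeg \<beta> < mdeg \<alpha>" unfolding mdeg_def
    using ne le by (intro sum_strict_mono_ex1) auto
  then show "((m, mx, \<beta>), m, mx, \<alpha>) \<in> Wellfounded.measure (\<lambda>(m, mx, \<alpha>). mdeg \<alpha>)" by simp
qed

declare kappa.simps [simp del]

definition polys_le :: "nat \<Rightarrow> (('n::finite \<Rightarrow> real) \<Rightarrow> real) set" where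
  "polys_le D = {f. \<exists>c. \<forall>y. f y = (\<Sum>\<alpha>\<in>{\<alpha>. mdeg \<alpha> \<le> D}. c \<alpha> * monom \<alpha> y)}"

(* Degree-D maximum correlation (as an extended real, so that the supremum is always meaningful) *)
definition corr_le :: "'a measure \<Rightarrow> ('a \<Rightarrow> 'n::finite \<Rightarrow> real) \<Rightarrow> ('a \<Rightarrow> real) \<Rightarrow> nat \<Rightarrow> ereal" where
  "corr_le M Y x D =
     (SUP f\<in>{f\<in>polys_le D. (\<integral>\<omega>. (f (Y \<omega>))\<^sup>2 \<partial>M) \<noteq> 0}.
        ereal ((\<integral>\<omega>. f (Y \<omega>) * x \<omega> \<partial>M) / sqrt (\<integral>\<omega>. (f (Y \<omega>))\<^sup>2 \<partial>M)))"

end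

theory Submission
  imports Defs "HOL-Computational_Algebra.Polynomial"
begin

text \<open>
  Expand a test polynomial f of degree at most D in the Hermite basis of the noise. The Appell
  property He_n(x + z) = sum_k (n choose k) x^(n-k) He_k(z) gives
  f(X + Z) = sum_beta A_beta(X) He_beta(Z) with polynomial coefficients A_beta. By independence
  and Hermite orthogonality, E f(Y)^2 = sum_beta beta! E[A_beta(X)^2] >= sum_beta beta! (E A_beta(X))^2,
  whereas E[f(Y) x] only sees beta = 0 and equals E[x A_0(X)]; expanding A_0 in monomials and
  inverting the recursion that defines kappa turns this into sum_beta kappa_beta E A_beta(X).
  Cauchy-Schwarz with weights beta! then bounds the correlation of f(Y) with x by
  (sum_beta kappa_beta^2 / beta!)^(1/2).
\<close>

section \<open>Hermite polynomials and the standard Gaussian\<close>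

fun hermite :: "nat \<Rightarrow> real poly" where
  "hermite 0 = 1"
| "hermite (Suc 0) = [:0, 1:]"
| "hermite (Suc (Suc n)) = pCons 0 (hermite (Suc n)) - smult (real (Suc n)) (hermite n)"

lemma pderiv_hermite: "pderiv (hermite (Suc n)) = smult (real (Suc n)) (hermite n)"
proof (induction n rule: induct_nat_012)
  case (ge2 n)
  have "pderiv (hermite (Suc (Suc (Suc n))))
      = hermite (Suc (Suc n)) + smult (real (Suc (Suc n)))
          (pCons 0 (hermite (Suc n)) - smult (real (Suc n)) (hermite n))"
    using ge2 by (simp add: pderiv_pCons pderiv_diff pderiv_smult smult_diff_right)
  also have "\<dots> = hermite (Suc (Suc n)) + smult (real (Suc (Suc n))) (hermite (Suc (Suc n)))"
    by simp
  also have "\<dots> = smult (1 + real (Suc (Suc n))) (hermite (Suc (Suc n)))"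
    by (simp only: smult_add_left smult_1_left)
  also have "\<dots> = smult (real (Suc (Suc (Suc n)))) (hermite (Suc (Suc n)))"
    by simp
  finally show ?case .
qed (simp_all add: pderiv_pCons)

lemma degree_hermite: "degree (hermite n) = n" and lead_coeff_hermite: "lead_coeff (hermite n) = 1"
proof -
  have "degree (hermite n) = n \<and> lead_coeff (hermite n) = 1"
  proof (induction n rule: induct_nat_012)
    case (ge2 n)
    have "degree (smult (real (Suc n)) (hermite n)) < degree (pCons 0 (hermite (Suc n)))"
      using ge2 by auto
    moreover have "hermite (Suc n) \<noteq> 0"
      using ge2 by auto
    ultimately show ?case
      using ge2
        degree_add_eq_left[of "- smult (real (Suc n)) (hermite n)" "pCons 0 (hermite (Suc n))"]
      by (auto simp: coeff_eq_0)
  qed simp_all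
  then show "degree (hermite n) = n" "lead_coeff (hermite n) = 1" by auto
qed

definition std_normal_moment :: "nat \<Rightarrow> real" where
  "std_normal_moment k = (\<integral>x. std_normal_density x * x ^ k \<partial>lborel)"

lemma std_normal_moment_0: "std_normal_moment 0 = 1"
  using integral_std_normal_moment_even[of 0] by (simp add: std_normal_moment_def)

lemma std_normal_moment_1: "std_normal_moment (Suc 0) = 0"
  using integral_std_normal_moment_odd[of 0] by (simp add: std_normal_moment_def)

lemma std_normal_moment_Suc_Suc:
  "std_normal_moment (Suc (Suc k)) = real (Suc k) * std_normal_moment k"
proof -
  have even: "std_normal_moment (2 * j) = fact (2 * j) / (2 ^ j * fact j)" for j
    unfolding std_normal_moment_def by (rule integral_std_normal_moment_even)
  have odd: "std_normal_moment (2 * j + 1) = 0" for j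
    unfolding std_normal_moment_def by (rule integral_std_normal_moment_odd)
  show ?thesis
  proof (cases "even k")
    case True
    then obtain j where k: "k = 2 * j" by (auto elim: evenE)
    have num: "(fact (2 * Suc j) :: real) = (2 * real j + 2) * ((2 * real j + 1) * fact (2 * j))"
      by (simp add: algebra_simps)
    have den: "(2 ^ Suc j * fact (Suc j) :: real) = (2 * real j + 2) * (2 ^ j * fact j)"
      by (simp add: algebra_simps)
    have "std_normal_moment (Suc (Suc k)) = fact (2 * Suc j) / (2 ^ Suc j * fact (Suc j))"
      using even[of "Suc j"] k by simp
    also have "\<dots> = real (Suc k) * (fact (2 * j) / (2 ^ j * fact j))"
      unfolding num den k by simp
    finally show ?thesis
      using even[of j] k by simp
  next
    case False
    then obtain j where k: "k = 2 * j + 1" by (auto elim: oddE)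
    show ?thesis
      using odd[of j] odd[of "Suc j"] k by simp
  qed
qed

lemma std_normal_moment_Suc: "std_normal_moment (Suc k) = real k * std_normal_moment (k - 1)"
  by (cases k) (simp_all add: std_normal_moment_1 std_normal_moment_Suc_Suc)

definition std_normal_expectation :: "real poly \<Rightarrow> real" where
  "std_normal_expectation p = (\<integral>x. std_normal_density x * poly p x \<partial>lborel)"

lemma integrable_std_normal_poly: "integrable lborel (\<lambda>x. std_normal_density x * poly p x)"
proof -
  have "(\<lambda>x. std_normal_density x * poly p x)
      = (\<lambda>x. \<Sum>i\<le>degree p. coeff p i * (std_normal_density x * x ^ i))"
    by (auto simp: poly_altdef sum_distrib_left algebra_simps)
  then show ?thesis
    by (auto intro!: integrable_sum integrable_mult_right integrable_std_normal_moment)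
qed

lemma std_normal_expectation_add:
  "std_normal_expectation (p + q) = std_normal_expectation p + std_normal_expectation q"
  unfolding std_normal_expectation_def
  using integrable_std_normal_poly[of p] integrable_std_normal_poly[of q]
  by (simp add: distrib_left)

lemma std_normal_expectation_smult:
  "std_normal_expectation (smult c p) = c * std_normal_expectation p"
  unfolding std_normal_expectation_def by (simp add: mult.left_commute)

lemma std_normal_expectation_diff:
  "std_normal_expectation (p - q) = std_normal_expectation p - std_normal_expectation q"
  using std_normal_expectation_add[of "p - q" q] by simp

lemma std_normal_expectation_0: "std_normal_expectation 0 = 0"
  by (simp add: std_normal_expectation_def)

lemma std_normal_expectation_sum:
  "std_normal_expectation (\<Sum>i\<in>A. f i) = (\<Sum>i\<in>A. std_normal_expectation (f i))"
  by (induction A rule: infinite_finite_induct)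
    (simp_all add: std_normal_expectation_add std_normal_expectation_0)

lemma std_normal_expectation_monom:
  "std_normal_expectation (Polynomial.monom c k) = c * std_normal_moment k"
  unfolding std_normal_expectation_def std_normal_moment_def
  by (simp add: poly_monom mult.left_commute)

lemma std_normal_expectation_const: "std_normal_expectation [:c:] = c"
  using std_normal_expectation_monom[of c 0] by (simp add: monom_0 std_normal_moment_0)

lemma std_normal_stein_identity:
  "std_normal_expectation (pCons 0 p) = std_normal_expectation (pderiv p)"
proof -
  have "pCons 0 p = [:0, 1:] * (\<Sum>i\<le>degree p. Polynomial.monom (coeff p i) i)"
    by (simp add: poly_as_sum_of_monoms)
  then have "std_normal_expectation (pCons 0 p)
      = (\<Sum>i\<le>degree p. coeff p i * std_normal_moment (Suc i))"
    by (simp add: sum_distrib_left std_normal_expectation_sum monom_Suc[symmetric]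
        std_normal_expectation_monom)
  also have "\<dots> = (\<Sum>i\<le>degree p. std_normal_expectation (pderiv (Polynomial.monom (coeff p i) i)))"
    by (simp add: pderiv_monom std_normal_expectation_monom std_normal_moment_Suc mult_ac)
  also have "\<dots> = std_normal_expectation (pderiv p)"
    using higher_pderiv_sum[of 1 "\<lambda>i. Polynomial.monom (coeff p i) i" "{..degree p}"]
    by (simp add: std_normal_expectation_sum[symmetric] poly_as_sum_of_monoms)
  finally show ?thesis .
qed

lemma std_normal_expectation_hermite_mult:
  "std_normal_expectation (hermite n * p) = std_normal_expectation ((pderiv ^^ n) p)"
proof (induction n arbitrary: p rule: induct_nat_012)
  case 0
  then show ?case by simp
next
  case 1
  then show ?case by (simp add: mult_pCons_left std_normal_stein_identity)
next
  case (ge2 n)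
  have "std_normal_expectation (hermite (Suc (Suc n)) * p)
      = std_normal_expectation (pderiv (hermite (Suc n) * p))
        - real (Suc n) * std_normal_expectation (hermite n * p)"
    by (simp add: mult_pCons_left left_diff_distrib std_normal_expectation_diff
        std_normal_expectation_smult std_normal_stein_identity)
  also have "\<dots> = std_normal_expectation (hermite (Suc n) * pderiv p)"
    by (simp add: pderiv_mult pderiv_hermite std_normal_expectation_add std_normal_expectation_smult
        mult.commute del: hermite.simps)
  also have "\<dots> = std_normal_expectation ((pderiv ^^ Suc (Suc n)) p)"
    using ge2(2)[of "pderiv p"] by (simp add: funpow_Suc_right del: funpow.simps)
  finally show ?case .
qed

lemma higher_pderiv_hermite:
  "(pderiv ^^ k) (hermite (k + m)) = smult (fact (k + m) / fact m) (hermite m)"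
proof (induction k)
  case (Suc k)
  have "(pderiv ^^ Suc k) (hermite (Suc k + m))
      = smult (real (Suc (k + m))) ((pderiv ^^ k) (hermite (k + m)))"
    by (simp add: funpow_Suc_right pderiv_hermite higher_pderiv_smult
        del: funpow.simps hermite.simps)
  then show ?case
    using Suc by (simp add: fact_Suc del: hermite.simps)
qed simp

lemma higher_pderiv_hermite_eq_0: "m < k \<Longrightarrow> (pderiv ^^ k) (hermite m) = 0"
proof -
  assume "m < k"
  then obtain j where k: "k = Suc j + m"
    using less_imp_Suc_add by (metis add.commute add_Suc)
  have "(pderiv ^^ m) (hermite m) = [:fact m:]"
    using higher_pderiv_hermite[of m 0] by simp
  then show ?thesis
    unfolding k funpow_add by (simp add: funpow_Suc_right del: funpow.simps)
qed

lemma std_normal_expectation_hermite_orthogonal: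
  "std_normal_expectation (hermite n * hermite m) = (if n = m then fact n else 0)"
proof -
  have *: "std_normal_expectation (hermite n * hermite m) = (if n = m then fact n else 0)"
    if "m \<le> n" for m n
  proof (cases "m = n")
    case True
    then show ?thesis
      using higher_pderiv_hermite[of n 0]
      by (simp add: std_normal_expectation_hermite_mult std_normal_expectation_const)
  next
    case False
    then show ?thesis
      using that higher_pderiv_hermite_eq_0[of m n]
      by (simp add: std_normal_expectation_hermite_mult std_normal_expectation_0)
  qed
  show ?thesis
    using *[of m n] *[of n m] by (cases "m \<le> n") (auto simp: mult.commute)
qed

lemma hermite_span:
  assumes "degree p \<le> n"
  shows "\<exists>t. p = (\<Sum>k\<le>n. smult (t k) (hermite k))"
  using assms
proof (induction n arbitrary: p)
  case 0
  then have "p = smult (coeff p 0) (hermite 0)"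
    by (simp add: degree_0_id)
  then show ?case by auto
next
  case (Suc n)
  define q where "q = p - smult (coeff p (Suc n)) (hermite (Suc n))"
  have "degree q \<le> n"
  proof (rule degree_le, intro allI impI)
    fix i assume "n < i"
    then show "coeff q i = 0"
      using Suc.prems degree_hermite[of "Suc n"] lead_coeff_hermite[of "Suc n"]
      by (cases "i = Suc n") (auto simp: q_def coeff_eq_0)
  qed
  then obtain t where t: "q = (\<Sum>k\<le>n. smult (t k) (hermite k))"
    using Suc.IH by blast
  have "p = (\<Sum>k\<le>Suc n. smult ((t(Suc n := coeff p (Suc n))) k) (hermite k))"
    using t by (simp add: q_def sum.atMost_Suc)
  then show ?case by blast
qed

lemma power_hermite_span: "\<exists>t. \<forall>z. z ^ n = (\<Sum>k\<le>n. t k * poly (hermite k) z)"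
proof -
  obtain t where t: "Polynomial.monom 1 n = (\<Sum>k\<le>n. smult (t k) (hermite k))"
    using hermite_span[of "Polynomial.monom 1 n" n] by (auto simp: degree_monom_le)
  have "z ^ n = (\<Sum>k\<le>n. t k * poly (hermite k) z)" for z
    using arg_cong[where f="\<lambda>p. poly p z", OF t] by (simp add: poly_monom poly_sum)
  then show ?thesis by blast
qed

lemma poly_eqI_pderiv:
  fixes p q :: "'a::{idom, ring_char_0} poly"
  assumes "pderiv p = pderiv q" and "poly p 0 = poly q 0"
  shows "p = q"
proof -
  have "degree (p - q) = 0"
    using assms(1) by (simp add: pderiv_diff pderiv_eq_0_iff[symmetric])
  moreover have "coeff (p - q) 0 = 0"
    using assms(2) by (simp add: poly_0_coeff_0)
  ultimately show ?thesis
    by (metis degree_0_id eq_iff_diff_eq_0 pCons_0_0)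
qed

definition appell_poly :: "(nat \<Rightarrow> real) \<Rightarrow> nat \<Rightarrow> real poly" where
  "appell_poly c n = (\<Sum>k\<le>n. Polynomial.monom (real (n choose k) * c k) (n - k))"

lemma pderiv_appell_poly:
  "pderiv (appell_poly c (Suc n)) = smult (real (Suc n)) (appell_poly c n)"
proof -
  have pderiv_sum: "pderiv (\<Sum>i\<in>A. f i) = (\<Sum>i\<in>A. pderiv (f i))"
    for A and f :: "nat \<Rightarrow> real poly"
    using higher_pderiv_sum[of 1 f A] by simp
  have smult_sum: "smult a (\<Sum>i\<in>A. f i) = (\<Sum>i\<in>A. smult a (f i))"
    for a A and f :: "nat \<Rightarrow> real poly"
    by (induction A rule: infinite_finite_induct) (simp_all add: smult_add_right)
  have "pderiv (appell_poly c (Suc n))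
      = (\<Sum>k\<le>n. Polynomial.monom (real (Suc n - k) * real (Suc n choose k) * c k) (n - k))"
    unfolding appell_poly_def pderiv_sum by (simp add: pderiv_monom sum.atMost_Suc mult.assoc)
  also have "\<dots> = (\<Sum>k\<le>n. smult (real (Suc n)) (Polynomial.monom (real (n choose k) * c k) (n - k)))"
  proof (rule sum.cong[OF refl])
    fix k
    have "real (Suc n - k) * real (Suc n choose k) = real (Suc n) * real (n choose k)"
      using binomial_absorb_comp[of "Suc n" k] by (metis diff_Suc_1 of_nat_mult)
    then show "Polynomial.monom (real (Suc n - k) * real (Suc n choose k) * c k) (n - k)
        = smult (real (Suc n)) (Polynomial.monom (real (n choose k) * c k) (n - k))"
      by (simp add: smult_monom mult.assoc)
  qed
  finally show ?thesis
    by (simp add: appell_poly_def smult_sum)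
qed

lemma poly_appell_poly_0: "poly (appell_poly c n) 0 = c n"
proof -
  have "poly (appell_poly c n) 0 = (\<Sum>k\<le>n. real (n choose k) * c k * 0 ^ (n - k))"
    by (simp add: appell_poly_def poly_sum poly_monom)
  also have "\<dots> = (\<Sum>k\<in>{n}. real (n choose k) * c k * 0 ^ (n - k))"
    by (intro sum.mono_neutral_right) auto
  finally show ?thesis
    by simp
qed

lemma appell_pcompose_shift:
  assumes "degree (p 0) = 0" and "\<And>n. pderiv (p (Suc n)) = smult (real (Suc n)) (p n)"
  shows "pcompose (p n) [:z, 1:] = appell_poly (\<lambda>k. poly (p k) z) n"
proof (induction n)
  case 0
  from assms(1) obtain a where "p 0 = [:a:]"
    by (metis degree_0_id)
  then show ?case
    by (simp add: appell_poly_def monom_0)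
next
  case (Suc n)
  show ?case
  proof (rule poly_eqI_pderiv)
    show "pderiv (pcompose (p (Suc n)) [:z, 1:]) = pderiv (appell_poly (\<lambda>k. poly (p k) z) (Suc n))"
      using Suc
      by (simp add: pderiv_pcompose assms(2) pcompose_smult pderiv_pCons pderiv_appell_poly)
  qed (simp add: poly_pcompose poly_appell_poly_0)
qed

lemma hermite_shift:
  "poly (hermite n) (x + z) = (\<Sum>k\<le>n. real (n choose k) * x ^ (n - k) * poly (hermite k) z)"
proof -
  have "poly (hermite n) (x + z) = poly (pcompose (hermite n) [:z, 1:]) x"
    by (simp add: poly_pcompose add.commute del: hermite.simps)
  then show ?thesis
    using appell_pcompose_shift[of hermite, OF degree_hermite[of 0] pderiv_hermite, of n z]
    by (simp add: appell_poly_def poly_sum poly_monom mult_ac del: hermite.simps)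
qed

section \<open>Multivariate Hermite expansion\<close>

definition mhermite :: "('n::finite \<Rightarrow> nat) \<Rightarrow> ('n \<Rightarrow> real) \<Rightarrow> real" where
  "mhermite \<beta> y = (\<Prod>i\<in>UNIV. poly (hermite (\<beta> i)) (y i))"

lemma mhermite_zero [simp]: "mhermite (\<lambda>_. 0) y = 1"
  by (simp add: mhermite_def)

lemma mfact_pos: "0 < mfact \<alpha>"
  unfolding mfact_def by (intro prod_pos) auto

abbreviation multi_indices_le :: "nat \<Rightarrow> ('n::finite \<Rightarrow> nat) set" where
  "multi_indices_le D \<equiv> {\<alpha>. mdeg \<alpha> \<le> D}"

lemma le_multi_index_eq_PiE: "{\<beta>::'n \<Rightarrow> nat. \<beta> \<le> \<alpha>} = PiE UNIV (\<lambda>i. {..\<alpha> i})"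
  by (auto simp: PiE_UNIV_domain le_fun_def)

lemma finite_le_multi_index: "finite {\<beta>::'n::finite \<Rightarrow> nat. \<beta> \<le> \<alpha>}"
  unfolding le_multi_index_eq_PiE by (intro finite_PiE) auto

lemma mdeg_mono: "\<beta> \<le> \<alpha> \<Longrightarrow> mdeg \<beta> \<le> mdeg (\<alpha>::'n::finite \<Rightarrow> nat)"
  unfolding mdeg_def by (intro sum_mono) (auto simp: le_fun_def)

lemma finite_multi_indices_le: "finite (multi_indices_le D :: ('n::finite \<Rightarrow> nat) set)"
proof (rule finite_subset[OF _ finite_le_multi_index[of "\<lambda>_. D"]])
  show "multi_indices_le D \<subseteq> {\<beta>::'n \<Rightarrow> nat. \<beta> \<le> (\<lambda>_. D)}"
  proof
    fix \<alpha> :: "'n \<Rightarrow> nat"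
    assume "\<alpha> \<in> multi_indices_le D"
    then have "\<alpha> i \<le> D" for i
      using member_le_sum[of i UNIV \<alpha>] unfolding mdeg_def by auto
    then show "\<alpha> \<in> {\<beta>. \<beta> \<le> (\<lambda>_. D)}" by (auto simp: le_fun_def)
  qed
qed

lemma sum_le_multi_index_eq:
  assumes "mdeg (\<alpha>::'n::finite \<Rightarrow> nat) \<le> D"
  shows "(\<Sum>\<beta>\<in>{\<beta>. \<beta> \<le> \<alpha>}. F \<beta>) = (\<Sum>\<beta>\<in>multi_indices_le D. if \<beta> \<le> \<alpha> then F \<beta> else (0::real))"
proof -
  have "{\<beta>. \<beta> \<le> \<alpha>} = {\<beta> \<in> multi_indices_le D. \<beta> \<le> \<alpha>}"
    using assms by (auto intro: order_trans[OF mdeg_mono])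
  then show ?thesis
    using sum.inter_filter[OF finite_multi_indices_le[of D], where g=F and P="\<lambda>\<beta>. \<beta> \<le> \<alpha>"] by simp
qed

lemma prod_sum_le_multi_index:
  fixes f :: "'n::finite \<Rightarrow> nat \<Rightarrow> real"
  shows "(\<Prod>i\<in>UNIV. \<Sum>k\<le>\<alpha> i. f i k) = (\<Sum>\<beta>\<in>{\<beta>. \<beta> \<le> \<alpha>}. \<Prod>i\<in>UNIV. f i (\<beta> i))"
  unfolding le_multi_index_eq_PiE by (rule prod_sum_PiE) auto

lemma monom_add: "monom (\<lambda>i. \<alpha> i + \<beta> i) y = monom \<alpha> y * monom \<beta> y"
  unfolding monom_def by (simp add: power_add prod.distrib)

lemma sum_monom_mult:
  "(\<Sum>j\<in>F. c j * monom (e j) y) * (\<Sum>k\<in>G. d k * monom (e' k) y) =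
   (\<Sum>jk\<in>F \<times> G. (c (fst jk) * d (snd jk)) * monom (\<lambda>i. e (fst jk) i + e' (snd jk) i) y)"
  by (simp add: sum_product sum.cartesian_product monom_add mult_ac split_def)

lemma mhermite_shift:
  "mhermite \<alpha> (\<lambda>i. x i + z i)
    = (\<Sum>\<beta>\<in>{\<beta>. \<beta> \<le> \<alpha>}. mbinom \<alpha> \<beta> * monom (\<lambda>i. \<alpha> i - \<beta> i) x * mhermite \<beta> z)"
  unfolding mhermite_def hermite_shift prod_sum_le_multi_index mbinom_def monom_def
  by (simp add: prod.distrib)

lemma monom_mhermite_span: "\<exists>c. \<forall>y. monom \<alpha> y = (\<Sum>\<beta>\<in>{\<beta>. \<beta> \<le> \<alpha>}. c \<beta> * mhermite \<beta> y)"
proof -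
  obtain t where t: "\<And>n z. z ^ n = (\<Sum>k\<le>n. t n k * poly (hermite k) z)"
    using power_hermite_span by metis
  have "monom \<alpha> y = (\<Sum>\<beta>\<in>{\<beta>. \<beta> \<le> \<alpha>}. (\<Prod>i\<in>UNIV. t (\<alpha> i) (\<beta> i)) * mhermite \<beta> y)" for y
    unfolding monom_def mhermite_def by (subst t) (simp add: prod_sum_le_multi_index prod.distrib)
  then show ?thesis by (intro exI[of _ "\<lambda>\<beta>. \<Prod>i\<in>UNIV. t (\<alpha> i) (\<beta> i)"]) blast
qed

lemma polys_le_mhermite_span:
  fixes f :: "('n::finite \<Rightarrow> real) \<Rightarrow> real"
  assumes "f \<in> polys_le D"
  shows "\<exists>h. \<forall>y. f y = (\<Sum>\<beta>\<in>multi_indices_le D. h \<beta> * mhermite \<beta> y)"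
proof -
  obtain a where f: "\<And>y. f y = (\<Sum>\<alpha>\<in>multi_indices_le D. a \<alpha> * monom \<alpha> y)"
    using assms unfolding polys_le_def by blast
  obtain c where c: "\<And>(\<alpha>::'n \<Rightarrow> nat) y. monom \<alpha> y = (\<Sum>\<beta>\<in>{\<beta>. \<beta> \<le> \<alpha>}. c \<alpha> \<beta> * mhermite \<beta> y)"
    using monom_mhermite_span by metis
  define h where "h \<beta> = (\<Sum>\<alpha>\<in>multi_indices_le D. a \<alpha> * (if \<beta> \<le> \<alpha> then c \<alpha> \<beta> else 0))" for \<beta>
  have "f y = (\<Sum>\<beta>\<in>multi_indices_le D. h \<beta> * mhermite \<beta> y)" for y
  proof -
    have "f y = (\<Sum>\<alpha>\<in>multi_indices_le D. \<Sum>\<beta>\<in>multi_indices_le D.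
        a \<alpha> * (if \<beta> \<le> \<alpha> then c \<alpha> \<beta> else 0) * mhermite \<beta> y)"
      unfolding f c
      by (intro sum.cong refl) (auto simp: sum_le_multi_index_eq sum_distrib_left intro!: sum.cong)
    also have "\<dots> = (\<Sum>\<beta>\<in>multi_indices_le D. h \<beta> * mhermite \<beta> y)"
      by (subst sum.swap) (simp add: h_def sum_distrib_right)
    finally show ?thesis .
  qed
  then show ?thesis by blast
qed

text \<open>The coefficient A_beta(x) of the proof sketch, for f = sum_alpha h_alpha He_alpha.\<close>

definition mhermite_shift_coeff ::
    "nat \<Rightarrow> (('n::finite \<Rightarrow> nat) \<Rightarrow> real) \<Rightarrow> ('n \<Rightarrow> nat) \<Rightarrow> ('n \<Rightarrow> real) \<Rightarrow> real" where
  "mhermite_shift_coeff D h \<beta> x =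
     (\<Sum>\<alpha>\<in>multi_indices_le D. h \<alpha> * (if \<beta> \<le> \<alpha> then mbinom \<alpha> \<beta> else 0) * monom (\<lambda>i. \<alpha> i - \<beta> i) x)"

lemma mhermite_expansion_shift:
  assumes "\<And>y. f y = (\<Sum>\<beta>\<in>multi_indices_le D. h \<beta> * mhermite \<beta> y)"
  shows "f (\<lambda>i. x i + z i) = (\<Sum>\<beta>\<in>multi_indices_le D. mhermite_shift_coeff D h \<beta> x * mhermite \<beta> z)"
proof -
  have "f (\<lambda>i. x i + z i) = (\<Sum>\<alpha>\<in>multi_indices_le D. \<Sum>\<beta>\<in>multi_indices_le D.
      h \<alpha> * (if \<beta> \<le> \<alpha> then mbinom \<alpha> \<beta> else 0) * monom (\<lambda>i. \<alpha> i - \<beta> i) x * mhermite \<beta> z)"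
    unfolding assms mhermite_shift
    by (intro sum.cong refl) (auto simp: sum_le_multi_index_eq sum_distrib_left intro!: sum.cong)
  also have "\<dots> = (\<Sum>\<beta>\<in>multi_indices_le D. mhermite_shift_coeff D h \<beta> x * mhermite \<beta> z)"
    by (subst sum.swap) (simp add: mhermite_shift_coeff_def sum_distrib_right)
  finally show ?thesis .
qed

lemma mhermite_shift_coeff_zero:
  "mhermite_shift_coeff D h (\<lambda>_. 0) x = (\<Sum>\<alpha>\<in>multi_indices_le D. h \<alpha> * monom \<alpha> x)"
  by (simp add: mhermite_shift_coeff_def mbinom_def le_fun_def)

lemma kappa_inversion:
  fixes \<alpha> :: "'n::finite \<Rightarrow> nat"
  assumes "m (\<lambda>_. 0) = 1"
  shows "mx \<alpha> = (\<Sum>\<beta>\<in>{\<beta>. \<beta> \<le> \<alpha>}. kappa m mx \<beta> * mbinom \<alpha> \<beta> * m (\<lambda>i. \<alpha> i - \<beta> i))"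
proof -
  have "{\<beta>. \<beta> \<le> \<alpha>} = insert \<alpha> {\<beta>. \<beta> \<le> \<alpha> \<and> \<beta> \<noteq> \<alpha>}"
    by auto
  moreover have "finite {\<beta>. \<beta> \<le> \<alpha> \<and> \<beta> \<noteq> \<alpha>}"
    by (rule finite_subset[OF _ finite_le_multi_index[of \<alpha>]]) auto
  ultimately show ?thesis
    using assms by (simp add: mbinom_def kappa.simps[of m mx \<alpha>])
qed

lemma Cauchy_Schwarz_ineq_sum_weighted:
  fixes a b w :: "'i \<Rightarrow> real"
  assumes "\<And>i. i \<in> A \<Longrightarrow> 0 < w i"
  shows "(\<Sum>i\<in>A. a i * b i)\<^sup>2 \<le> (\<Sum>i\<in>A. (a i)\<^sup>2 / w i) * (\<Sum>i\<in>A. w i * (b i)\<^sup>2)"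
proof -
  have "(\<Sum>i\<in>A. a i * b i) = (\<Sum>i\<in>A. (a i / sqrt (w i)) * (sqrt (w i) * b i))"
    by (intro sum.cong refl) (auto dest: assms)
  also have "(\<dots>)\<^sup>2 \<le> (\<Sum>i\<in>A. (a i / sqrt (w i))\<^sup>2) * (\<Sum>i\<in>A. (sqrt (w i) * b i)\<^sup>2)"
    by (rule Cauchy_Schwarz_ineq_sum)
  also have "\<dots> = (\<Sum>i\<in>A. (a i)\<^sup>2 / w i) * (\<Sum>i\<in>A. w i * (b i)\<^sup>2)"
    by (intro arg_cong2[where f="(*)"] sum.cong refl)
      (auto simp: power_divide power_mult_distrib dest: assms)
  finally show ?thesis .
qed

lemma abs_divide_sqrt_le:
  fixes N S E :: real
  assumes "N\<^sup>2 \<le> S * E" and "0 < E"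
  shows "\<bar>N / sqrt E\<bar> \<le> sqrt S"
proof -
  have "\<bar>N\<bar> \<le> sqrt S * sqrt E"
    using real_sqrt_le_mono[OF assms(1)] by (simp add: real_sqrt_mult)
  then show ?thesis
    using assms(2) by (simp add: abs_divide pos_divide_le_eq)
qed

lemma ereal_power2_le_of_bounds:
  assumes "- ereal r \<le> c" and "c \<le> ereal r"
  shows "c\<^sup>2 \<le> ereal (r\<^sup>2)"
proof (cases c)
  case (real x)
  then have "\<bar>x\<bar> \<le> r"
    using assms by auto
  then have "\<bar>x\<bar>\<^sup>2 \<le> r\<^sup>2"
    by (rule power_mono) simp
  then show ?thesis
    using real by simp
qed (use assms in auto)

lemma one_in_polys_le: "(\<lambda>_. 1) \<in> polys_le D"
  unfolding polys_le_def
proof (intro CollectI exI allI)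
  fix y :: "'n::finite \<Rightarrow> real"
  have "(\<lambda>_. 0) \<in> multi_indices_le D"
    by (simp add: mdeg_def)
  have "(\<Sum>\<alpha>\<in>multi_indices_le D. (if \<alpha> = (\<lambda>_. 0) then 1 else 0) * monom \<alpha> y)
      = (\<Sum>\<alpha>\<in>multi_indices_le D. if \<alpha> = (\<lambda>_::'n. 0) then 1 else (0::real))"
    by (rule sum.cong[OF refl]) (simp add: monom_def)
  with \<open>(\<lambda>_. 0) \<in> multi_indices_le D\<close>
  show "1 = (\<Sum>\<alpha>\<in>multi_indices_le D. (if \<alpha> = (\<lambda>_. 0) then 1 else 0) * monom \<alpha> y)"
    by (simp add: finite_multi_indices_le)
qed

lemma borel_measurable_poly [measurable]: "(\<lambda>x::real. poly p x) \<in> borel_measurable borel"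
  by (intro borel_measurable_continuous_onI continuous_on_poly continuous_on_id)

lemma borel_measurable_poly_comp [measurable]:
  "f \<in> borel_measurable N \<Longrightarrow> (\<lambda>x. poly p (f x :: real)) \<in> borel_measurable N"
  using measurable_comp[OF _ borel_measurable_poly, of f N p] by (simp add: comp_def)

lemma borel_measurable_monom [measurable]:
  "monom \<alpha> \<in> borel_measurable (Pi\<^sub>M UNIV (\<lambda>_. borel))"
  unfolding monom_def by measurable

lemma borel_measurable_mhermite [measurable]:
  "mhermite \<beta> \<in> borel_measurable (Pi\<^sub>M UNIV (\<lambda>_. borel))"
  unfolding mhermite_def by measurable

section \<open>Gaussian integrals and the correlation bound\<close>

locale std_gaussian_vector = prob_space M for M :: "'a measure" +
  fixes Z :: "'a \<Rightarrow> 'n::finite \<Rightarrow> real"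
  assumes Z_gauss: "\<And>i. distributed M lborel (\<lambda>\<omega>. Z \<omega> i) std_normal_density"
    and Z_iid: "indep_vars (\<lambda>_. borel) (\<lambda>i \<omega>. Z \<omega> i) UNIV"
begin

lemma has_bochner_integral_poly_component:
  "has_bochner_integral M (\<lambda>\<omega>. poly p (Z \<omega> i)) (std_normal_expectation p)"
proof -
  have [measurable]: "(\<lambda>x. poly p x) \<in> borel_measurable lborel"
    by simp
  show ?thesis
    using distributed_integrable[OF Z_gauss] distributed_integral[OF Z_gauss]
      integrable_std_normal_poly[of p]
    by (simp add: has_bochner_integral_iff std_normal_expectation_def)
qed

lemma has_bochner_integral_prod_poly:
  "has_bochner_integral M (\<lambda>\<omega>. \<Prod>i\<in>UNIV. poly (p i) (Z \<omega> i)) (\<Prod>i\<in>UNIV. std_normal_expectation (p i))"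
proof -
  have indep: "indep_vars (\<lambda>_. borel) (\<lambda>i \<omega>. poly (p i) (Z \<omega> i)) UNIV"
    by (rule indep_vars_compose2[OF Z_iid]) simp
  have "integrable M (\<lambda>\<omega>. poly (p i) (Z \<omega> i))" for i
    by (rule integrable.intros[OF has_bochner_integral_poly_component])
  with indep show ?thesis
    using has_bochner_integral_poly_component[THEN has_bochner_integral_integral_eq]
    by (simp add: has_bochner_integral_iff indep_vars_integrable indep_vars_lebesgue_integral)
qed

lemma has_bochner_integral_mhermite_mult:
  "has_bochner_integral M (\<lambda>\<omega>. mhermite \<beta> (Z \<omega>) * mhermite \<beta>' (Z \<omega>))
    (if \<beta> = \<beta>' then mfact \<beta> else 0)"
proof -
  have "(\<Prod>i\<in>UNIV. std_normal_expectation (hermite (\<beta> i) * hermite (\<beta>' i)))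
      = (if \<beta> = \<beta>' then mfact \<beta> else 0)"
    by (auto simp: std_normal_expectation_hermite_orthogonal mfact_def fun_eq_iff)
  then show ?thesis
    using has_bochner_integral_prod_poly[of "\<lambda>i. hermite (\<beta> i) * hermite (\<beta>' i)"]
    by (simp add: mhermite_def prod.distrib)
qed

lemma has_bochner_integral_mhermite:
  "has_bochner_integral M (\<lambda>\<omega>. mhermite \<beta> (Z \<omega>)) (if \<beta> = (\<lambda>_. 0) then 1 else 0)"
  using has_bochner_integral_mhermite_mult[of \<beta> "\<lambda>_. 0"] by (auto simp: mfact_def)

end

locale additive_gaussian_model = std_gaussian_vector M Z
  for M :: "'a measure" and Z :: "'a \<Rightarrow> 'n::finite \<Rightarrow> real" +
  fixes X :: "'a \<Rightarrow> 'n \<Rightarrow> real" and g :: "('n \<Rightarrow> real) \<Rightarrow> real"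
  assumes g_meas [measurable]: "g \<in> borel_measurable (Pi\<^sub>M UNIV (\<lambda>_. borel))"
    and X_moments: "\<And>\<alpha>. integrable M (\<lambda>\<omega>. monom \<alpha> (X \<omega>))"
    and joint_moments: "\<And>(k::nat) \<alpha>. integrable M (\<lambda>\<omega>. g (X \<omega>) ^ k * monom \<alpha> (X \<omega>))"
    and XZ_indep: "indep_var (Pi\<^sub>M UNIV (\<lambda>_. borel)) X (Pi\<^sub>M UNIV (\<lambda>_. borel)) Z"
begin

definition moment_X :: "('n \<Rightarrow> nat) \<Rightarrow> real" where
  "moment_X \<gamma> = (\<integral>\<omega>. monom \<gamma> (X \<omega>) \<partial>M)"

definition cross_moment :: "('n \<Rightarrow> nat) \<Rightarrow> real" where
  "cross_moment \<gamma> = (\<integral>\<omega>. g (X \<omega>) * monom \<gamma> (X \<omega>) \<partial>M)"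

lemma has_bochner_integral_mult_indep:
  fixes F G :: "('n \<Rightarrow> real) \<Rightarrow> real"
  assumes [measurable]: "F \<in> borel_measurable (Pi\<^sub>M UNIV (\<lambda>_. borel))"
      "G \<in> borel_measurable (Pi\<^sub>M UNIV (\<lambda>_. borel))"
    and "has_bochner_integral M (\<lambda>\<omega>. F (X \<omega>)) a" "has_bochner_integral M (\<lambda>\<omega>. G (Z \<omega>)) b"
  shows "has_bochner_integral M (\<lambda>\<omega>. F (X \<omega>) * G (Z \<omega>)) (a * b)"
proof -
  have indep: "indep_var borel (\<lambda>\<omega>. F (X \<omega>)) borel (\<lambda>\<omega>. G (Z \<omega>))"
    using indep_var_compose[OF XZ_indep assms(1,2)] by (simp add: comp_def)
  have "integrable M (\<lambda>\<omega>. F (X \<omega>))" "integrable M (\<lambda>\<omega>. G (Z \<omega>))"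
    using assms(3,4) by (simp_all add: has_bochner_integral_iff)
  with assms(3,4) show ?thesis
    using indep_var_integrable[OF indep] indep_var_lebesgue_integral[OF indep]
    by (simp add: has_bochner_integral_iff)
qed

lemma integrable_monom_sum_X: "integrable M (\<lambda>\<omega>. \<Sum>j\<in>F. c j * monom (e j) (X \<omega>))"
  by (auto intro!: integrable_sum integrable_mult_right X_moments)

lemma integrable_cross_monom_sum_X:
  "integrable M (\<lambda>\<omega>. g (X \<omega>) * (\<Sum>j\<in>F. c j * monom (e j) (X \<omega>)))"
proof -
  have "integrable M (\<lambda>\<omega>. \<Sum>j\<in>F. c j * (g (X \<omega>) * monom (e j) (X \<omega>)))"
    using joint_moments[of 1] by (auto intro!: integrable_sum integrable_mult_right)
  then show ?thesis
    by (simp add: sum_distrib_left mult_ac)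
qed

lemma integral_mhermite_shift_coeff:
  "(\<integral>\<omega>. mhermite_shift_coeff D h \<beta> (X \<omega>) \<partial>M) =
    (\<Sum>\<alpha>\<in>multi_indices_le D. h \<alpha> * (if \<beta> \<le> \<alpha> then mbinom \<alpha> \<beta> else 0) * moment_X (\<lambda>i. \<alpha> i - \<beta> i))"
  unfolding mhermite_shift_coeff_def moment_X_def using X_moments by simp

lemma second_moment_mhermite_expansion:
  assumes f: "\<And>y. f y = (\<Sum>\<beta>\<in>multi_indices_le D. h \<beta> * mhermite \<beta> y)"
  shows "has_bochner_integral M (\<lambda>\<omega>. (f (\<lambda>i. X \<omega> i + Z \<omega> i))\<^sup>2)
    (\<Sum>\<beta>\<in>multi_indices_le D. (\<integral>\<omega>. (mhermite_shift_coeff D h \<beta> (X \<omega>))\<^sup>2 \<partial>M) * mfact \<beta>)"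
proof -
  let ?A = "mhermite_shift_coeff D h"
  have "(f (\<lambda>i. x i + z i))\<^sup>2 = (\<Sum>\<beta>\<in>multi_indices_le D. \<Sum>\<beta>'\<in>multi_indices_le D.
      (?A \<beta> x * ?A \<beta>' x) * (mhermite \<beta> z * mhermite \<beta>' z))" for x z
    unfolding mhermite_expansion_shift[OF f] power2_eq_square sum_product by (simp add: mult_ac)
  moreover have "has_bochner_integral M
      (\<lambda>\<omega>. (?A \<beta> (X \<omega>) * ?A \<beta>' (X \<omega>)) * (mhermite \<beta> (Z \<omega>) * mhermite \<beta>' (Z \<omega>)))
      ((\<integral>\<omega>. ?A \<beta> (X \<omega>) * ?A \<beta>' (X \<omega>) \<partial>M) * (if \<beta> = \<beta>' then mfact \<beta> else 0))" for \<beta> \<beta>'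
  proof (rule has_bochner_integral_mult_indep[OF _ _ _ has_bochner_integral_mhermite_mult])
    show "has_bochner_integral M (\<lambda>\<omega>. ?A \<beta> (X \<omega>) * ?A \<beta>' (X \<omega>)) (\<integral>\<omega>. ?A \<beta> (X \<omega>) * ?A \<beta>' (X \<omega>) \<partial>M)"
      unfolding mhermite_shift_coeff_def sum_monom_mult
      by (intro has_bochner_integral_integrable integrable_monom_sum_X)
  qed (simp_all add: mhermite_shift_coeff_def)
  ultimately have "has_bochner_integral M (\<lambda>\<omega>. (f (\<lambda>i. X \<omega> i + Z \<omega> i))\<^sup>2)
      (\<Sum>\<beta>\<in>multi_indices_le D. \<Sum>\<beta>'\<in>multi_indices_le D.
        (\<integral>\<omega>. ?A \<beta> (X \<omega>) * ?A \<beta>' (X \<omega>) \<partial>M) * (if \<beta> = \<beta>' then mfact \<beta> else 0))"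
    by (simp add: has_bochner_integral_sum)
  also have "(\<Sum>\<beta>\<in>multi_indices_le D. \<Sum>\<beta>'\<in>multi_indices_le D.
        (\<integral>\<omega>. ?A \<beta> (X \<omega>) * ?A \<beta>' (X \<omega>) \<partial>M) * (if \<beta> = \<beta>' then mfact \<beta> else 0))
      = (\<Sum>\<beta>\<in>multi_indices_le D. (\<integral>\<omega>. (?A \<beta> (X \<omega>))\<^sup>2 \<partial>M) * mfact \<beta>)"
    by (simp add: if_distrib finite_multi_indices_le power2_eq_square cong: if_cong)
  finally show ?thesis .
qed

lemma correlation_eq_cross_moments:
  assumes f: "\<And>y. f y = (\<Sum>\<beta>\<in>multi_indices_le D. h \<beta> * mhermite \<beta> y)"
  shows "(\<integral>\<omega>. f (\<lambda>i. X \<omega> i + Z \<omega> i) * g (X \<omega>) \<partial>M)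
    = (\<Sum>\<alpha>\<in>multi_indices_le D. h \<alpha> * cross_moment \<alpha>)"
proof -
  let ?A = "mhermite_shift_coeff D h"
  have "f (\<lambda>i. x i + z i) * g x = (\<Sum>\<beta>\<in>multi_indices_le D. (g x * ?A \<beta> x) * mhermite \<beta> z)"
    for x z
    unfolding mhermite_expansion_shift[OF f]
    by (simp add: sum_distrib_left sum_distrib_right mult_ac)
  moreover have "has_bochner_integral M (\<lambda>\<omega>. (g (X \<omega>) * ?A \<beta> (X \<omega>)) * mhermite \<beta> (Z \<omega>))
      ((\<integral>\<omega>. g (X \<omega>) * ?A \<beta> (X \<omega>) \<partial>M) * (if \<beta> = (\<lambda>_. 0) then 1 else 0))" for \<beta>
  proof (rule has_bochner_integral_mult_indep[OF _ _ _ has_bochner_integral_mhermite])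
    show "has_bochner_integral M (\<lambda>\<omega>. g (X \<omega>) * ?A \<beta> (X \<omega>))
        (\<integral>\<omega>. g (X \<omega>) * ?A \<beta> (X \<omega>) \<partial>M)"
      unfolding mhermite_shift_coeff_def
      by (intro has_bochner_integral_integrable integrable_cross_monom_sum_X)
  qed (simp_all add: mhermite_shift_coeff_def)
  ultimately have "has_bochner_integral M (\<lambda>\<omega>. f (\<lambda>i. X \<omega> i + Z \<omega> i) * g (X \<omega>))
      (\<Sum>\<beta>\<in>multi_indices_le D.
        (\<integral>\<omega>. g (X \<omega>) * ?A \<beta> (X \<omega>) \<partial>M) * (if \<beta> = (\<lambda>_. 0) then 1 else 0))"
    by (simp add: has_bochner_integral_sum)
  moreover have "(\<lambda>_::'n. 0) \<in> multi_indices_le D"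
    by (simp add: mdeg_def)
  ultimately have "(\<integral>\<omega>. f (\<lambda>i. X \<omega> i + Z \<omega> i) * g (X \<omega>) \<partial>M)
      = (\<integral>\<omega>. g (X \<omega>) * ?A (\<lambda>_. 0) (X \<omega>) \<partial>M)"
    by (simp add: has_bochner_integral_iff finite_multi_indices_le if_distrib cong: if_cong)
  also have "\<dots> = (\<Sum>\<alpha>\<in>multi_indices_le D. h \<alpha> * cross_moment \<alpha>)"
    unfolding mhermite_shift_coeff_zero cross_moment_def sum_distrib_left
    using joint_moments[of 1] by (simp add: mult.left_commute)
  finally show ?thesis .
qed

lemma cross_moments_eq_kappa_sum:
  "(\<Sum>\<alpha>\<in>multi_indices_le D. h \<alpha> * cross_moment \<alpha>)
    = (\<Sum>\<beta>\<in>multi_indices_le D.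
        kappa moment_X cross_moment \<beta> * (\<integral>\<omega>. mhermite_shift_coeff D h \<beta> (X \<omega>) \<partial>M))"
proof -
  have "moment_X (\<lambda>_. 0) = 1"
    by (simp add: moment_X_def monom_def prob_space)
  then have "(\<Sum>\<alpha>\<in>multi_indices_le D. h \<alpha> * cross_moment \<alpha>)
      = (\<Sum>\<alpha>\<in>multi_indices_le D. \<Sum>\<beta>\<in>multi_indices_le D. kappa moment_X cross_moment \<beta> *
          (h \<alpha> * (if \<beta> \<le> \<alpha> then mbinom \<alpha> \<beta> else 0) * moment_X (\<lambda>i. \<alpha> i - \<beta> i)))"
    by (intro sum.cong refl, subst kappa_inversion[of moment_X cross_moment])
      (auto simp: sum_le_multi_index_eq sum_distrib_left intro!: sum.cong)
  also have "\<dots> = (\<Sum>\<beta>\<in>multi_indices_le D.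
      kappa moment_X cross_moment \<beta> * (\<integral>\<omega>. mhermite_shift_coeff D h \<beta> (X \<omega>) \<partial>M))"
    by (subst sum.swap) (simp add: integral_mhermite_shift_coeff sum_distrib_left)
  finally show ?thesis .
qed

lemma correlation_ratio_le:
  fixes f :: "('n \<Rightarrow> real) \<Rightarrow> real"
  assumes "f \<in> polys_le D" and "(\<integral>\<omega>. (f (\<lambda>i. X \<omega> i + Z \<omega> i))\<^sup>2 \<partial>M) \<noteq> 0"
  shows "\<bar>(\<integral>\<omega>. f (\<lambda>i. X \<omega> i + Z \<omega> i) * g (X \<omega>) \<partial>M) / sqrt (\<integral>\<omega>. (f (\<lambda>i. X \<omega> i + Z \<omega> i))\<^sup>2 \<partial>M)\<bar>
    \<le> sqrt (\<Sum>\<beta>\<in>multi_indices_le D. (kappa moment_X cross_moment \<beta>)\<^sup>2 / mfact \<beta>)"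
proof -
  obtain h where f: "\<And>y. f y = (\<Sum>\<beta>\<in>multi_indices_le D. h \<beta> * mhermite \<beta> y)"
    using polys_le_mhermite_span[OF assms(1)] by blast
  let ?A = "mhermite_shift_coeff D h"
  define b where "b \<beta> = (\<integral>\<omega>. ?A \<beta> (X \<omega>) \<partial>M)" for \<beta>
  define E where "E = (\<integral>\<omega>. (f (\<lambda>i. X \<omega> i + Z \<omega> i))\<^sup>2 \<partial>M)"
  have E: "E = (\<Sum>\<beta>\<in>multi_indices_le D. (\<integral>\<omega>. (?A \<beta> (X \<omega>))\<^sup>2 \<partial>M) * mfact \<beta>)"
    unfolding E_def
    by (rule has_bochner_integral_integral_eq[OF second_moment_mhermite_expansion[OF f]])
  have "(b \<beta>)\<^sup>2 \<le> (\<integral>\<omega>. (?A \<beta> (X \<omega>))\<^sup>2 \<partial>M)" for \<beta>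
  proof -
    have "integrable M (\<lambda>\<omega>. ?A \<beta> (X \<omega>))" "integrable M (\<lambda>\<omega>. (?A \<beta> (X \<omega>))\<^sup>2)"
      unfolding mhermite_shift_coeff_def power2_eq_square sum_monom_mult
      by (rule integrable_monom_sum_X)+
    then show ?thesis
      using variance_positive[of "\<lambda>\<omega>. ?A \<beta> (X \<omega>)"] by (simp add: b_def variance_eq)
  qed
  then have "(\<Sum>\<beta>\<in>multi_indices_le D. mfact \<beta> * (b \<beta>)\<^sup>2) \<le> E"
    unfolding E by (intro sum_mono) (simp add: mfact_pos mult.commute)
  then have "(\<Sum>\<beta>\<in>multi_indices_le D. kappa moment_X cross_moment \<beta> * b \<beta>)\<^sup>2
      \<le> (\<Sum>\<beta>\<in>multi_indices_le D. (kappa moment_X cross_moment \<beta>)\<^sup>2 / mfact \<beta>) * E"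
    by (intro order_trans[OF Cauchy_Schwarz_ineq_sum_weighted[where w=mfact]]
        mult_left_mono sum_nonneg)
      (simp_all add: mfact_pos less_imp_le[OF mfact_pos])
  moreover have "0 < E"
    using assms(2) unfolding E_def by (simp add: order_less_le)
  ultimately show ?thesis
    unfolding correlation_eq_cross_moments[OF f] cross_moments_eq_kappa_sum b_def[symmetric]
      E_def[symmetric]
    by (rule abs_divide_sqrt_le)
qed

lemma corr_le_bounds:
  fixes D :: nat
  defines "S \<equiv> (\<Sum>\<beta>\<in>multi_indices_le D. (kappa moment_X cross_moment \<beta>)\<^sup>2 / mfact \<beta>)"
  shows "- ereal (sqrt S) \<le> corr_le M (\<lambda>\<omega> i. X \<omega> i + Z \<omega> i) (\<lambda>\<omega>. g (X \<omega>)) D"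
    and "corr_le M (\<lambda>\<omega> i. X \<omega> i + Z \<omega> i) (\<lambda>\<omega>. g (X \<omega>)) D \<le> ereal (sqrt S)"
proof -
  let ?V = "{f \<in> polys_le D. (\<integral>\<omega>. (f (\<lambda>i. X \<omega> i + Z \<omega> i))\<^sup>2 \<partial>M) \<noteq> 0}"
  let ?r = "\<lambda>f. (\<integral>\<omega>. f (\<lambda>i. X \<omega> i + Z \<omega> i) * g (X \<omega>) \<partial>M) / sqrt (\<integral>\<omega>. (f (\<lambda>i. X \<omega> i + Z \<omega> i))\<^sup>2 \<partial>M)"
  have corr: "corr_le M (\<lambda>\<omega> i. X \<omega> i + Z \<omega> i) (\<lambda>\<omega>. g (X \<omega>)) D = (SUP f\<in>?V. ereal (?r f))"
    unfolding corr_le_def ..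
  have bound: "- sqrt S \<le> ?r f \<and> ?r f \<le> sqrt S" if "f \<in> ?V" for f
    using correlation_ratio_le[where f=f and D=D] that unfolding S_def abs_le_iff by auto
  \<comment> \<open>The lower bound needs ?V nonempty: a supremum over the empty set is -\<infinity>.\<close>
  have one: "(\<lambda>_. 1) \<in> ?V"
    using one_in_polys_le by (simp add: prob_space)
  show "- ereal (sqrt S) \<le> corr_le M (\<lambda>\<omega> i. X \<omega> i + Z \<omega> i) (\<lambda>\<omega>. g (X \<omega>)) D"
    unfolding corr using bound[OF one] by (intro order_trans[OF _ SUP_upper[OF one]]) simp
  show "corr_le M (\<lambda>\<omega> i. X \<omega> i + Z \<omega> i) (\<lambda>\<omega>. g (X \<omega>)) D \<le> ereal (sqrt S)"
    unfolding corr using bound by (intro SUP_least) simp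
qed

end

theorem mainTheorem1:
  fixes M :: "'a measure"
    and X Z :: "'a \<Rightarrow> 'n::finite \<Rightarrow> real"
    and g :: "('n \<Rightarrow> real) \<Rightarrow> real"
    and D :: nat
  assumes "prob_space M"
    and g_meas: "g \<in> borel_measurable (Pi\<^sub>M UNIV (\<lambda>_. borel))"
    and X_moments: "\<And>\<alpha>. integrable M (\<lambda>\<omega>. monom \<alpha> (X \<omega>))"
    and joint_moments: "\<And>(k::nat) \<alpha>. integrable M (\<lambda>\<omega>. g (X \<omega>) ^ k * monom \<alpha> (X \<omega>))"
    and Z_gauss: "\<And>i. distributed M lborel (\<lambda>\<omega>. Z \<omega> i) std_normal_density"
    and Z_iid: "prob_space.indep_vars M (\<lambda>_. borel) (\<lambda>i \<omega>. Z \<omega> i) UNIV"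
    and XZ_indep: "prob_space.indep_var M (Pi\<^sub>M UNIV (\<lambda>_. borel)) X (Pi\<^sub>M UNIV (\<lambda>_. borel)) Z"
  shows "(corr_le M (\<lambda>\<omega> i. X \<omega> i + Z \<omega> i) (\<lambda>\<omega>. g (X \<omega>)) D)\<^sup>2
    \<le> ereal (\<Sum>\<alpha>\<in>{\<alpha>. mdeg \<alpha> \<le> D}.
          (kappa (\<lambda>\<gamma>. \<integral>\<omega>. monom \<gamma> (X \<omega>) \<partial>M)
                 (\<lambda>\<gamma>. \<integral>\<omega>. g (X \<omega>) * monom \<gamma> (X \<omega>) \<partial>M) \<alpha>)\<^sup>2 / mfact \<alpha>)"
proof -
  interpret additive_gaussian_model M Z X g
    by (intro additive_gaussian_model.intro std_gaussian_vector.intro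
        additive_gaussian_model_axioms.intro std_gaussian_vector_axioms.intro assms)
  have "0 \<le> (\<Sum>\<alpha>\<in>multi_indices_le D. (kappa moment_X cross_moment \<alpha>)\<^sup>2 / mfact \<alpha>)"
    by (intro sum_nonneg divide_nonneg_nonneg) (simp_all add: less_imp_le[OF mfact_pos])
  with ereal_power2_le_of_bounds[OF corr_le_bounds[of D]] show ?thesis
    by (simp add: moment_X_def[abs_def] cross_moment_def[abs_def] real_sqrt_pow2)
qed

end
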